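(* Let $\sigma$ be a non-negative integer and $f\in H^2_\sigma(\mathbb{D})$. Then for every $a\in\mathbb{D}$ there is a constant $C(\sigma,a)$, depending only on $\sigma$ and $a$, such that for all integers $n\ge 1$ $$\left|\left\langle f,\frac{k_{n,a}}{\|k_{n,a}\|}\right\rangle\right|\le C(\sigma,a)\,\frac{1}{n^{\sigma}}\,\|f\|_{H^2_\sigma}.$$
   Context: $\mathbb{D}$ is the open unit disc; $H^2(\mathbb{D})$ the Hardy space with inner product $\langle f,g\rangle=\frac{1}{2\pi}\int_0^{2\pi}f(e^{it})\overline{g(e^{it})}\,dt$ (for $f=\sum c_kz^k$, $\|f\|^2=\sum|c_k|^2$). For $n\in\mathbb{N}$, $a\in\mathbb{D}$: $k_{n,a}(z)=\left(\frac{\partial}{\partial\overline{a}}\right)^n\frac{1}{1-\overline{a}z}=\frac{n!\,z^n}{(1-\overline{a}z)^{n+1}}$. For $\sigma\ge 0$ the Hardy–Sobolev space is $H^2_\sigma(\mathbb{D})=\{f(z)=\sum_{k\ge0}c_kz^k:\ \sum_{k\ge0}|(1+k^\sigma)c_k|^2<\infty\}$ with $\|f\|_{H^2_\sigma}=\left(\sum_{k\ge0}|(1+k^\sigma)c_k|^2\right)^{1/2}$. *)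

theory Defs
  imports "HOL-Complex_Analysis.Complex_Analysis"
begin

definition taylor_coeff :: "(complex \<Rightarrow> complex) \<Rightarrow> nat \<Rightarrow> complex" where
  "taylor_coeff f k = (deriv ^^ k) f 0 / of_nat (fact k)"

definition H2_inner :: "(complex \<Rightarrow> complex) \<Rightarrow> (complex \<Rightarrow> complex) \<Rightarrow> complex" where
  "H2_inner f g = (\<Sum>k. taylor_coeff f k * cnj (taylor_coeff g k))"

definition H2_norm :: "(complex \<Rightarrow> complex) \<Rightarrow> real" where
  "H2_norm f = sqrt (\<Sum>k. (cmod (taylor_coeff f k))\<^sup>2)"

definition HS_space :: "real \<Rightarrow> (complex \<Rightarrow> complex) set" where
  "HS_space \<sigma> = {f. f holomorphic_on ball 0 1 \<and>
      summable (\<lambda>k. ((1 + real k powr \<sigma>) * cmod (taylor_coeff f k))\<^sup>2)}"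

definition HS_norm :: "real \<Rightarrow> (complex \<Rightarrow> complex) \<Rightarrow> real" where
  "HS_norm \<sigma> f = sqrt (\<Sum>k. ((1 + real k powr \<sigma>) * cmod (taylor_coeff f k))\<^sup>2)"

definition kna :: "nat \<Rightarrow> complex \<Rightarrow> complex \<Rightarrow> complex" where
  "kna n a z = of_nat (fact n) * z ^ n / (1 - cnj a * z) ^ (n + 1)"

end

theory Submission
  imports Defs
begin

text \<open>Since k_{n,a}(z) = z^n h(z) with h holomorphic at 0, the Taylor coefficients of
  k_{n,a} vanish below degree n, so only indices k \<ge> n enter the pairing with f. There the
  Hardy--Sobolev weight satisfies 1 + k^\<sigma> \<ge> n^\<sigma>, and the weighted Cauchy--Schwarz
  inequality gives |\<langle>f, g\<rangle>| \<le> n^{-\<sigma>} \<parallel>f\<parallel>_{H^2_\<sigma>} \<parallel>g\<parallel>_{H^2}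
  for every such g. The normalised kernel has H^2 norm at most 1 (k_{n,a} is holomorphic on a
  disc of radius > 1, so its coefficients are square summable), hence C = 1 works for every a.\<close>

lemma summable_mult_of_summable_squares:
  fixes x y :: "nat \<Rightarrow> real"
  assumes "summable (\<lambda>k. (x k)\<^sup>2)" "summable (\<lambda>k. (y k)\<^sup>2)"
  shows "summable (\<lambda>k. x k * y k)"
proof (rule summable_comparison_test)
  have "norm (x k * y k) \<le> ((\<bar>x k\<bar>)\<^sup>2 + (\<bar>y k\<bar>)\<^sup>2) / 2" for k
    using sum_squares_bound[of "\<bar>x k\<bar>" "\<bar>y k\<bar>"] by (simp add: abs_mult)
  then show "\<exists>N. \<forall>k\<ge>N. norm (x k * y k) \<le> ((x k)\<^sup>2 + (y k)\<^sup>2) / 2" by simp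
qed (use assms in \<open>intro summable_divide summable_add\<close>)

lemma suminf_mult_le_sqrt:
  fixes x y :: "nat \<Rightarrow> real"
  assumes x: "summable (\<lambda>k. (x k)\<^sup>2)" and y: "summable (\<lambda>k. (y k)\<^sup>2)"
  shows "(\<Sum>k. x k * y k) \<le> sqrt (\<Sum>k. (x k)\<^sup>2) * sqrt (\<Sum>k. (y k)\<^sup>2)"
proof (rule suminf_le_const)
  show "summable (\<lambda>k. x k * y k)" by (rule summable_mult_of_summable_squares[OF x y])
  fix m
  have "(\<Sum>k<m. x k * y k) \<le> (\<Sum>k<m. \<bar>x k\<bar> * \<bar>y k\<bar>)"
    by (intro sum_mono) (simp flip: abs_mult)
  also have "\<dots> \<le> L2_set x {..<m} * L2_set y {..<m}" by (rule L2_set_mult_ineq)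
  also have "\<dots> \<le> sqrt (\<Sum>k. (x k)\<^sup>2) * sqrt (\<Sum>k. (y k)\<^sup>2)"
    unfolding L2_set_def
    by (intro mult_mono real_sqrt_le_mono sum_le_suminf x y)
      (auto intro!: suminf_nonneg sum_nonneg x)
  finally show "(\<Sum>k<m. x k * y k) \<le> sqrt (\<Sum>k. (x k)\<^sup>2) * sqrt (\<Sum>k. (y k)\<^sup>2)" .
qed

lemma H2_inner_le_HS_norm_tail:
  fixes \<sigma> :: real
  assumes f: "f \<in> HS_space \<sigma>" and \<sigma>: "0 \<le> \<sigma>" and n: "n \<ge> 1"
    and g: "summable (\<lambda>k. (cmod (taylor_coeff g k))\<^sup>2)"
    and g_vanishes: "\<And>k. k < n \<Longrightarrow> taylor_coeff g k = 0"
  shows "cmod (H2_inner f g) \<le> HS_norm \<sigma> f * H2_norm g / real n powr \<sigma>"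
proof -
  define w where "w k = (1 + real k powr \<sigma>) * cmod (taylor_coeff f k)" for k
  define v where "v k = cmod (taylor_coeff g k)" for k
  have w: "summable (\<lambda>k. (w k)\<^sup>2)" using f by (simp add: HS_space_def w_def)
  have v: "summable (\<lambda>k. (v k)\<^sup>2)" using g by (simp add: v_def)
  have wv: "summable (\<lambda>k. w k * v k)" by (rule summable_mult_of_summable_squares[OF w v])
  have term_le: "cmod (taylor_coeff f k * cnj (taylor_coeff g k)) \<le> w k * v k / real n powr \<sigma>"
    for k
  proof (cases "k < n")
    case True
    then show ?thesis by (simp add: g_vanishes v_def)
  next
    case False
    then have "real n powr \<sigma> \<le> 1 + real k powr \<sigma>"
      using n \<sigma> powr_mono2[of \<sigma> "real n" "real k"] by simp
    then have "real n powr \<sigma> * cmod (taylor_coeff f k) \<le> w k"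
      unfolding w_def by (rule mult_right_mono) simp
    then have "real n powr \<sigma> * (cmod (taylor_coeff f k) * v k) \<le> w k * v k"
      unfolding mult.assoc[symmetric] by (rule mult_right_mono) (simp add: v_def)
    then show ?thesis
      using n by (simp add: v_def norm_mult pos_le_divide_eq mult.commute)
  qed
  have terms_summable: "summable (\<lambda>k. cmod (taylor_coeff f k * cnj (taylor_coeff g k)))"
    by (rule summable_comparison_test[OF _ summable_divide[OF wv]]) (use term_le in auto)
  have "cmod (H2_inner f g) \<le> (\<Sum>k. cmod (taylor_coeff f k * cnj (taylor_coeff g k)))"
    unfolding H2_inner_def by (rule summable_norm[OF terms_summable])
  also have "\<dots> \<le> (\<Sum>k. w k * v k / real n powr \<sigma>)"
    by (rule suminf_le[OF term_le terms_summable summable_divide[OF wv]])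
  also have "\<dots> = (\<Sum>k. w k * v k) / real n powr \<sigma>" by (rule suminf_divide[OF wv])
  also have "\<dots> \<le> HS_norm \<sigma> f * H2_norm g / real n powr \<sigma>"
    using suminf_mult_le_sqrt[OF w v]
    by (intro divide_right_mono) (simp_all add: HS_norm_def H2_norm_def w_def v_def)
  finally show ?thesis .
qed

lemma taylor_coeff_cmult:
  assumes "f analytic_on {0}"
  shows "taylor_coeff (\<lambda>z. c * f z) k = c * taylor_coeff f k"
  using assms by (simp add: taylor_coeff_def higher_deriv_cmult')

lemma taylor_coeff_divide:
  assumes "f analytic_on {0}"
  shows "taylor_coeff (\<lambda>z. f z / c) k = taylor_coeff f k / c"
  using taylor_coeff_cmult[OF assms, of "inverse c"] by (simp add: field_simps)

lemma taylor_coeff_power_mult_eq_0: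
  assumes "g analytic_on {0}" "k < n"
  shows "taylor_coeff (\<lambda>z. z ^ n * g z) k = 0"
proof -
  have "(deriv ^^ i) (\<lambda>z. z ^ n) 0 = 0" if "i \<le> k" for i
    using higher_deriv_power[of i 0 n 0] that assms(2) by (simp add: power_0_left)
  then have "(deriv ^^ k) (\<lambda>z. z ^ n * g z) 0 = 0"
    using assms(1) by (simp add: higher_deriv_mult_at analytic_intros)
      (auto intro!: sum.neutral)
  then show ?thesis by (simp add: taylor_coeff_def)
qed

lemma taylor_coeff_kna_eq_0:
  assumes "k < n"
  shows "taylor_coeff (kna n a) k = 0"
proof -
  have "kna n a = (\<lambda>z. z ^ n * (of_nat (fact n) / (1 - cnj a * z) ^ (n + 1)))"
    by (simp add: kna_def fun_eq_iff)
  moreover have "(\<lambda>z. of_nat (fact n) / (1 - cnj a * z) ^ (n + 1)) analytic_on {0}"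
    by (auto intro!: analytic_intros)
  ultimately show ?thesis using taylor_coeff_power_mult_eq_0 assms by presburger
qed

lemma kna_holomorphic_on_ball:
  assumes "cmod a < 1"
  obtains R where "R > 1" "kna n a holomorphic_on ball 0 R"
proof
  define R where "R = 2 / (1 + cmod a)"
  have "0 < 1 + cmod a" by (simp add: add_pos_nonneg)
  show "R > 1" using assms \<open>0 < 1 + cmod a\<close> by (simp add: R_def field_simps)
  have "cnj a * z \<noteq> 1" if "z \<in> ball 0 R" for z
  proof -
    have "cmod (cnj a * z) \<le> cmod a * R"
      using that by (simp add: norm_mult mult_left_mono)
    also have "\<dots> < 1" using assms \<open>0 < 1 + cmod a\<close> by (simp add: R_def field_simps)
    finally show ?thesis by auto
  qed
  then show "kna n a holomorphic_on ball 0 R"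
    unfolding kna_def by (auto intro!: holomorphic_intros)
qed

lemma summable_taylor_coeff_square:
  assumes f: "f holomorphic_on ball 0 R" and R: "1 < R"
  shows "summable (\<lambda>k. (cmod (taylor_coeff f k))\<^sup>2)"
proof -
  define r where "r = (1 + R) / 2"
  have r: "1 < r" "r < R" using R by (auto simp: r_def)
  have "(\<lambda>k. taylor_coeff f k * of_real r ^ k) sums f (of_real r)"
    using holomorphic_power_series[OF f, of "of_real r"] r by (simp add: taylor_coeff_def)
  then have "Bseq (\<lambda>k. taylor_coeff f k * of_real r ^ k)"
    by (rule convergent_imp_Bseq[OF convergentI[OF summable_LIMSEQ_zero[OF sums_summable]]])
  then obtain K where K: "\<And>k. cmod (taylor_coeff f k) * r ^ k \<le> K"
    using r by (auto elim!: BseqE simp: norm_mult norm_power) blast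
  have bound: "(cmod (taylor_coeff f k))\<^sup>2 \<le> K\<^sup>2 * (1 / r\<^sup>2) ^ k" for k
  proof -
    have "(cmod (taylor_coeff f k))\<^sup>2 = (cmod (taylor_coeff f k) * r ^ k)\<^sup>2 * (1 / r\<^sup>2) ^ k"
      using r by (simp add: power_mult_distrib power_divide mult.commute flip: power_mult)
    also have "\<dots> \<le> K\<^sup>2 * (1 / r\<^sup>2) ^ k"
      using K[of k] r by (intro mult_right_mono power_mono) auto
    finally show ?thesis .
  qed
  have "summable (\<lambda>k. K\<^sup>2 * (1 / r\<^sup>2) ^ k)"
    using r by (intro summable_mult summable_geometric) simp
  then show ?thesis by (rule summable_comparison_test') (use bound in simp)
qed

lemma H2_norm_divide:
  assumes "f analytic_on {0}" "summable (\<lambda>k. (cmod (taylor_coeff f k))\<^sup>2)"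
  shows "H2_norm (\<lambda>z. f z / complex_of_real c) = H2_norm f / \<bar>c\<bar>"
proof -
  have "(\<Sum>k. (cmod (taylor_coeff (\<lambda>z. f z / complex_of_real c) k))\<^sup>2) =
        (\<Sum>k. (cmod (taylor_coeff f k))\<^sup>2) / c\<^sup>2"
    using assms by (simp add: taylor_coeff_divide norm_divide power_divide suminf_divide)
  then show ?thesis by (simp add: H2_norm_def real_sqrt_divide)
qed

theorem theorem7:
  fixes \<sigma> :: nat and a :: complex
  assumes "a \<in> ball 0 1"
  shows "\<exists>C. \<forall>f \<in> HS_space (real \<sigma>). \<forall>n::nat. n \<ge> 1 \<longrightarrow>
           cmod (H2_inner f (\<lambda>z. kna n a z / complex_of_real (H2_norm (kna n a))))
             \<le> C * (1 / real n ^ \<sigma>) * HS_norm (real \<sigma>) f"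
proof (intro exI[of _ 1] ballI allI impI)
  fix f and n :: nat
  assume f: "f \<in> HS_space (real \<sigma>)" and n: "n \<ge> 1"
  obtain R where "R > 1" and hol: "kna n a holomorphic_on ball 0 R"
    using kna_holomorphic_on_ball assms by (metis mem_ball_0)
  then have analytic: "kna n a analytic_on {0}" by (auto intro: holomorphic_on_imp_analytic_at)
  have summable: "summable (\<lambda>k. (cmod (taylor_coeff (kna n a) k))\<^sup>2)"
    by (rule summable_taylor_coeff_square[OF hol \<open>R > 1\<close>])
  define g where "g = (\<lambda>z. kna n a z / complex_of_real (H2_norm (kna n a)))"
  have g_coeff:
    "taylor_coeff g k = taylor_coeff (kna n a) k / complex_of_real (H2_norm (kna n a))" for k
    unfolding g_def by (rule taylor_coeff_divide[OF analytic])
  have "cmod (H2_inner f g) \<le> HS_norm (real \<sigma>) f * H2_norm g / real n powr real \<sigma>"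
  proof (rule H2_inner_le_HS_norm_tail[OF f _ n])
    show "summable (\<lambda>k. (cmod (taylor_coeff g k))\<^sup>2)"
      using summable by (simp add: g_coeff norm_divide power_divide summable_divide)
    show "taylor_coeff g k = 0" if "k < n" for k
      using that by (simp add: g_coeff taylor_coeff_kna_eq_0)
  qed simp
  also have "\<dots> \<le> 1 * (1 / real n ^ \<sigma>) * HS_norm (real \<sigma>) f"
  proof -
    have "H2_norm g \<le> 1"
      unfolding g_def H2_norm_divide[OF analytic summable]
      by (simp add: divide_le_eq_1 abs_ge_self)
    moreover have "HS_norm (real \<sigma>) f \<ge> 0"
      using f by (simp add: HS_norm_def HS_space_def suminf_nonneg)
    ultimately show ?thesis
      using n by (simp add: powr_realpow divide_right_mono mult_left_le)
  qed
  finally show "cmod (H2_inner f (\<lambda>z. kna n a z / complex_of_real (H2_norm (kna n a))))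
      \<le> 1 * (1 / real n ^ \<sigma>) * HS_norm (real \<sigma>) f"
    by (simp only: g_def)
qed

end
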